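(* Let $D$ be a dialgebra and $E$ a dendriform algebra over $K$. Then on $D\otimes E$ the bracket defined on generators by $$[x\otimes a,y\otimes b]:=(x\dashv y)\otimes(a\prec b)-(y\vdash x)\otimes(b\succ a)-(y\dashv x)\otimes(b\prec a)+(x\vdash y)\otimes(a\succ b)$$ ($x,y\in D$, $a,b\in E$), extended bilinearly, is a Lie bracket.
   Context: A dialgebra is a vector space $D$ with bilinear $\dashv,\vdash$ satisfying $(x\dashv y)\dashv z=x\dashv(y\vdash z)$, $(x\dashv y)\dashv z=x\dashv(y\dashv z)$, $(x\vdash y)\dashv z=x\vdash(y\dashv z)$, $(x\dashv y)\vdash z=x\vdash(y\vdash z)$, $(x\vdash y)\vdash z=x\vdash(y\vdash z)$. A dendriform algebra is a vector space $E$ with bilinear $\prec,\succ$ satisfying (i) $(a\prec b)\prec c=a\prec(b\prec c)+a\prec(b\succ c)$, (ii) $(a\succ b)\prec c=a\succ(b\prec c)$, (iii) $(a\prec b)\succ c+(a\succ b)\succ c=a\succ(b\succ c)$. *)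

theory Defs
  imports Main "HOL.Vector_Spaces" "HOL-Library.Function_Algebras"
begin

definition bilinear_op ::
  "('k::field \<Rightarrow> 'v::ab_group_add \<Rightarrow> 'v) \<Rightarrow> ('v \<Rightarrow> 'v \<Rightarrow> 'v) \<Rightarrow> bool" where
  "bilinear_op sc m \<longleftrightarrow>
     (\<forall>x y z. m (x + y) z = m x z + m y z) \<and>
     (\<forall>x y z. m x (y + z) = m x y + m x z) \<and>
     (\<forall>c x y. m (sc c x) y = sc c (m x y)) \<and>
     (\<forall>c x y. m x (sc c y) = sc c (m x y))"

definition dialgebra ::
  "('k::field \<Rightarrow> 'd::ab_group_add \<Rightarrow> 'd) \<Rightarrow> ('d \<Rightarrow> 'd \<Rightarrow> 'd) \<Rightarrow> ('d \<Rightarrow> 'd \<Rightarrow> 'd) \<Rightarrow> bool" where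
  "dialgebra sc l r \<longleftrightarrow> vector_space sc \<and> bilinear_op sc l \<and> bilinear_op sc r \<and>
     (\<forall>x y z. l (l x y) z = l x (r y z)) \<and>
     (\<forall>x y z. l (l x y) z = l x (l y z)) \<and>
     (\<forall>x y z. l (r x y) z = r x (l y z)) \<and>
     (\<forall>x y z. r (l x y) z = r x (r y z)) \<and>
     (\<forall>x y z. r (r x y) z = r x (r y z))"
(* l = \<dashv>, r = \<turnstile> *)

definition dendriform ::
  "('k::field \<Rightarrow> 'e::ab_group_add \<Rightarrow> 'e) \<Rightarrow> ('e \<Rightarrow> 'e \<Rightarrow> 'e) \<Rightarrow> ('e \<Rightarrow> 'e \<Rightarrow> 'e) \<Rightarrow> bool" where
  "dendriform sc p s \<longleftrightarrow> vector_space sc \<and> bilinear_op sc p \<and> bilinear_op sc s \<and>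
     (\<forall>a b c. p (p a b) c = p a (p b c) + p a (s b c)) \<and>
     (\<forall>a b c. p (s a b) c = s a (p b c)) \<and>
     (\<forall>a b c. s (p a b) c + s (s a b) c = s a (s b c))"
(* p = \<prec>, s = \<succ> *)

(* Tensor product D \<otimes> E = F / N, where F is the free K-vector space on D \<times> E
   (finitely supported functions D \<times> E \<Rightarrow> K) and N the subspace spanned by the
   bilinearity relations. *)

definition fscale :: "'k::field \<Rightarrow> ('d \<times> 'e \<Rightarrow> 'k) \<Rightarrow> ('d \<times> 'e \<Rightarrow> 'k)" where
  "fscale c f = (\<lambda>p. c * f p)"

definition free_space :: "('d \<times> 'e \<Rightarrow> 'k::field) set" where
  "free_space = {f. finite {p. f p \<noteq> 0}}"

definition gen :: "'d \<Rightarrow> 'e \<Rightarrow> ('d \<times> 'e \<Rightarrow> 'k::field)" where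
  "gen x a = (\<lambda>p. if p = (x, a) then 1 else 0)"

definition tensor_relations ::
  "('k::field \<Rightarrow> 'd::ab_group_add \<Rightarrow> 'd) \<Rightarrow> ('k \<Rightarrow> 'e::ab_group_add \<Rightarrow> 'e) \<Rightarrow> ('d \<times> 'e \<Rightarrow> 'k) set" where
  "tensor_relations scD scE =
     {gen (x + x') a - gen x a - gen x' a | x x' a. True} \<union>
     {gen x (a + a') - gen x a - gen x a' | x a a'. True} \<union>
     {gen (scD c x) a - fscale c (gen x a) | c x a. True} \<union>
     {gen x (scE c a) - fscale c (gen x a) | c x a. True}"

definition tensor_kernel ::
  "('k::field \<Rightarrow> 'd::ab_group_add \<Rightarrow> 'd) \<Rightarrow> ('k \<Rightarrow> 'e::ab_group_add \<Rightarrow> 'e) \<Rightarrow> ('d \<times> 'e \<Rightarrow> 'k) set" where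
  "tensor_kernel scD scE = module.span fscale (tensor_relations scD scE)"

definition gen_bracket ::
  "('d \<Rightarrow> 'd \<Rightarrow> 'd) \<Rightarrow> ('d \<Rightarrow> 'd \<Rightarrow> 'd) \<Rightarrow> ('e \<Rightarrow> 'e \<Rightarrow> 'e) \<Rightarrow> ('e \<Rightarrow> 'e \<Rightarrow> 'e)
   \<Rightarrow> 'd \<Rightarrow> 'e \<Rightarrow> 'd \<Rightarrow> 'e \<Rightarrow> ('d \<times> 'e \<Rightarrow> 'k::field)" where
  "gen_bracket l r p s x a y b =
     gen (l x y) (p a b) - gen (r y x) (s b a) - gen (l y x) (p b a) + gen (r x y) (s a b)"

definition tbracket ::
  "('d \<Rightarrow> 'd \<Rightarrow> 'd) \<Rightarrow> ('d \<Rightarrow> 'd \<Rightarrow> 'd) \<Rightarrow> ('e \<Rightarrow> 'e \<Rightarrow> 'e) \<Rightarrow> ('e \<Rightarrow> 'e \<Rightarrow> 'e)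
   \<Rightarrow> ('d \<times> 'e \<Rightarrow> 'k::field) \<Rightarrow> ('d \<times> 'e \<Rightarrow> 'k) \<Rightarrow> ('d \<times> 'e \<Rightarrow> 'k)" where
  "tbracket l r p s u v =
     (\<Sum>q\<in>{q. u q \<noteq> 0}. \<Sum>q'\<in>{q'. v q' \<noteq> 0}.
        fscale (u q * v q') (gen_bracket l r p s (fst q) (snd q) (fst q') (snd q')))"

end

theory Submission
  imports Defs
begin

(* The bracket is the commutator [u, v] = u v - v u of the product
   (x \<otimes> a)(y \<otimes> b) = (x \<dashv> y) \<otimes> (a \<prec> b) + (x \<turnstile> y) \<otimes> (a \<succ> b) on D \<otimes> E, and this product is
   associative. On generators, the five dialgebra axioms reduce the D-factors of the four terms
   of (u v) w and of u (v w) to x \<dashv> (y \<dashv> z), x \<turnstile> (y \<dashv> z) and x \<turnstile> (y \<turnstile> z); the three dendriform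
   axioms then match the E-factors, up to additivity in the second tensor factor. The product
   respects the kernel N because multiplication by a fixed generator is a sum of tensor products
   f \<otimes> g of linear maps, which send relations to relations. The commutator of an associative
   product satisfies Jacobi, the Jacobiator being an alternating sum of six associators. *)

interpretation fs: module "fscale :: 'k::field \<Rightarrow> ('d \<times> 'e \<Rightarrow> 'k) \<Rightarrow> _"
  by unfold_locales (auto simp: fscale_def algebra_simps)

lemma subspace_free_space: "fs.subspace free_space"
proof (rule fs.subspaceI)
  show "0 \<in> free_space" by (simp add: free_space_def)
next
  fix u v :: "'d \<times> 'e \<Rightarrow> 'k::field" assume "u \<in> free_space" "v \<in> free_space"
  then show "u + v \<in> free_space"
    unfolding free_space_def
    by (auto intro: finite_subset[of _ "{q. u q \<noteq> 0} \<union> {q. v q \<noteq> 0}"])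
next
  fix c and u :: "'d \<times> 'e \<Rightarrow> 'k::field" assume "u \<in> free_space"
  then show "fscale c u \<in> free_space"
    unfolding free_space_def fscale_def by (auto intro: finite_subset[of _ "{q. u q \<noteq> 0}"])
qed

lemmas free_space_add = fs.subspace_add[OF subspace_free_space]
  and free_space_diff = fs.subspace_diff[OF subspace_free_space]
  and free_space_scale = fs.subspace_scale[OF subspace_free_space]

lemma gen_in_free_space: "gen x a \<in> free_space"
  unfolding free_space_def gen_def by (auto intro: finite_subset[of _ "{(x, a)}"])

(* Linear only on free_space: for u of infinite support the sum is 0. *)
definition lin_ext ::
  "('d \<times> 'e \<Rightarrow> ('d' \<times> 'e' \<Rightarrow> 'k::field)) \<Rightarrow> ('d \<times> 'e \<Rightarrow> 'k) \<Rightarrow> ('d' \<times> 'e' \<Rightarrow> 'k)"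
  where "lin_ext h u = (\<Sum>q | u q \<noteq> 0. fscale (u q) (h q))"

lemma lin_ext_eq_sum:
  assumes "finite S" "{q. u q \<noteq> 0} \<subseteq> S"
  shows "lin_ext h u = (\<Sum>q\<in>S. fscale (u q) (h q))"
  unfolding lin_ext_def using assms by (intro sum.mono_neutral_left) auto

lemma lin_ext_add:
  assumes "u \<in> free_space" "v \<in> free_space"
  shows "lin_ext h (u + v) = lin_ext h u + lin_ext h v"
proof -
  let ?S = "{q. u q \<noteq> 0} \<union> {q. v q \<noteq> 0}"
  have "finite ?S" using assms by (simp add: free_space_def)
  then show ?thesis
    by (subst (1 2 3) lin_ext_eq_sum[of ?S])
      (auto simp: fs.scale_left_distrib sum.distrib)
qed

lemma lin_ext_scale: "lin_ext h (fscale c u) = fscale c (lin_ext h u)"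
proof (cases "c = 0")
  case True
  then show ?thesis by (simp add: lin_ext_def)
next
  case False
  then have "{q. fscale c u q \<noteq> 0} = {q. u q \<noteq> 0}" by (simp add: fscale_def)
  then show ?thesis
    by (simp add: lin_ext_def fs.scale_sum_right) (simp add: fscale_def mult.assoc)
qed

lemma lin_ext_diff:
  assumes "u \<in> free_space" "v \<in> free_space"
  shows "lin_ext h (u - v) = lin_ext h u - lin_ext h v"
  using lin_ext_add[OF free_space_diff[OF assms] assms(2), of h]
  by (simp add: algebra_simps)

lemma lin_ext_gen: "lin_ext h (gen x a) = h (x, a)"
proof -
  have "{q. gen x a q \<noteq> (0::'k::field)} = {(x, a)}" by (auto simp: gen_def)
  then show ?thesis by (simp add: lin_ext_def gen_def fscale_def)
qed

lemma lin_ext_add_fun: "lin_ext (\<lambda>q. h q + h' q) u = lin_ext h u + lin_ext h' u"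
  by (simp add: lin_ext_def fs.scale_right_distrib sum.distrib)

lemma lin_ext_diff_fun: "lin_ext (\<lambda>q. h q - h' q) u = lin_ext h u - lin_ext h' u"
  by (simp add: lin_ext_def fs.scale_right_diff_distrib sum_subtractf)

lemma lin_ext_scale_fun: "lin_ext (\<lambda>q. fscale c (h q)) u = fscale c (lin_ext h u)"
  by (simp add: lin_ext_def fs.scale_sum_right mult.commute)

lemma lin_ext_in_subspace:
  assumes "fs.subspace V" "\<And>q. h q \<in> V"
  shows "lin_ext h u \<in> V"
  unfolding lin_ext_def by (intro fs.subspace_sum fs.subspace_scale assms)

lemma lin_ext_gen_self:
  assumes "u \<in> free_space"
  shows "lin_ext (case_prod gen) u = u"
proof
  fix q0
  have "lin_ext (case_prod gen) u q0 = (\<Sum>q | u q \<noteq> 0. fscale (u q) (case_prod gen q) q0)"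
    unfolding lin_ext_def using sum_comp_morphism[of "\<lambda>f. f q0", symmetric] by (simp add: o_def)
  also have "\<dots> = (\<Sum>q | u q \<noteq> 0. if q = q0 then u q else 0)"
    by (intro sum.cong) (auto simp: fscale_def gen_def)
  also have "\<dots> = u q0"
    using assms by (simp add: free_space_def sum.delta')
  finally show "lin_ext (case_prod gen) u q0 = u q0" .
qed

lemma free_space_eq_span_gen: "free_space = fs.span (range (case_prod gen))"
proof
  show "free_space \<subseteq> fs.span (range (case_prod gen))"
    using lin_ext_gen_self lin_ext_in_subspace[OF fs.subspace_span fs.span_base]
    by (metis rangeI subsetI)
  show "fs.span (range (case_prod gen)) \<subseteq> free_space"
    by (intro fs.span_minimal subspace_free_space) (auto simp: gen_in_free_space)
qed

definition linear_on_free_space :: "(('d \<times> 'e \<Rightarrow> 'k::field) \<Rightarrow> ('d' \<times> 'e' \<Rightarrow> 'k)) \<Rightarrow> bool"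
  where "linear_on_free_space f \<longleftrightarrow>
     (\<forall>u\<in>free_space. \<forall>v\<in>free_space. f (u + v) = f u + f v) \<and>
     (\<forall>c. \<forall>u\<in>free_space. f (fscale c u) = fscale c (f u))"

lemma linear_on_free_space_lin_ext: "linear_on_free_space (lin_ext h)"
  by (simp add: linear_on_free_space_def lin_ext_add lin_ext_scale)

lemma linear_on_free_space_diff_apply:
  assumes "linear_on_free_space f" "u \<in> free_space" "v \<in> free_space"
  shows "f (u - v) = f u - f v"
proof -
  have "f u = f (u - v) + f v"
    using assms free_space_diff unfolding linear_on_free_space_def
    by (metis diff_add_cancel)
  then show ?thesis by simp
qed

lemma linear_on_free_space_diff:
  assumes "linear_on_free_space f" "linear_on_free_space g"
  shows "linear_on_free_space (\<lambda>u. f u - g u)"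
  using assms by (simp add: linear_on_free_space_def fs.scale_right_diff_distrib)

lemma linear_on_free_space_comp:
  assumes "linear_on_free_space g" "linear_on_free_space f"
    and "\<And>u. u \<in> free_space \<Longrightarrow> f u \<in> free_space"
  shows "linear_on_free_space (\<lambda>u. g (f u))"
  using assms free_space_add free_space_scale
  by (simp add: linear_on_free_space_def)

lemma linear_on_free_space_span_into_subspace:
  assumes f: "linear_on_free_space f" and V: "fs.subspace V"
    and "S \<subseteq> free_space" "\<And>u. u \<in> S \<Longrightarrow> f u \<in> V" "u \<in> fs.span S"
  shows "f u \<in> V"
proof -
  have "f 0 = f 0 + f 0"
    using f fs.subspace_0[OF subspace_free_space] unfolding linear_on_free_space_def by (metis add_0)
  then have "f 0 \<in> V" using fs.subspace_0[OF V] by simp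
  then have "fs.subspace {u \<in> free_space. f u \<in> V}"
    using f unfolding linear_on_free_space_def
    by (intro fs.subspaceI)
      (simp_all add: fs.subspace_0 fs.subspace_add fs.subspace_scale subspace_free_space V)
  then have "fs.span S \<subseteq> {u \<in> free_space. f u \<in> V}"
    using assms(3,4) by (intro fs.span_minimal) auto
  then show ?thesis using \<open>u \<in> fs.span S\<close> by blast
qed

lemma linear_on_free_space_into_subspace:
  assumes "linear_on_free_space f" "fs.subspace V" "\<And>x a. f (gen x a) \<in> V" "u \<in> free_space"
  shows "f u \<in> V"
proof (rule linear_on_free_space_span_into_subspace[OF assms(1,2)])
  show "range (case_prod gen) \<subseteq> free_space"
    using gen_in_free_space by auto
  show "f v \<in> V" if "v \<in> range (case_prod gen)" for v
    using that assms(3) by auto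
  show "u \<in> fs.span (range (case_prod gen))"
    using assms(4) free_space_eq_span_gen by blast
qed

lemma trilinear_on_free_space_into_subspace:
  assumes V: "fs.subspace V"
    and lin1: "\<And>v w. v \<in> free_space \<Longrightarrow> w \<in> free_space
      \<Longrightarrow> linear_on_free_space (\<lambda>u. f u v w)"
    and lin2: "\<And>u w. u \<in> free_space \<Longrightarrow> w \<in> free_space
      \<Longrightarrow> linear_on_free_space (\<lambda>v. f u v w)"
    and lin3: "\<And>u v. u \<in> free_space \<Longrightarrow> v \<in> free_space
      \<Longrightarrow> linear_on_free_space (f u v)"
    and gen: "\<And>x a y b z c. f (gen x a) (gen y b) (gen z c) \<in> V"
    and "u \<in> free_space" "v \<in> free_space" "w \<in> free_space"
  shows "f u v w \<in> V"
proof -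
  have "f (gen x a) (gen y b) w \<in> V" for x a y b
    by (rule linear_on_free_space_into_subspace[OF lin3[OF gen_in_free_space gen_in_free_space]
          V gen assms(8)])
  then have "f (gen x a) v w \<in> V" for x a
    by (rule linear_on_free_space_into_subspace[OF lin2[OF gen_in_free_space assms(8)] V _ assms(7)])
  then show ?thesis
    by (rule linear_on_free_space_into_subspace[OF lin1[OF assms(7,8)] V _ assms(6)])
qed

definition bil_ext ::
  "('d \<times> 'e \<Rightarrow> 'd \<times> 'e \<Rightarrow> ('d' \<times> 'e' \<Rightarrow> 'k::field))
   \<Rightarrow> ('d \<times> 'e \<Rightarrow> 'k) \<Rightarrow> ('d \<times> 'e \<Rightarrow> 'k) \<Rightarrow> ('d' \<times> 'e' \<Rightarrow> 'k)"
  where "bil_ext B u v = lin_ext (\<lambda>q. lin_ext (B q) v) u"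

lemma bil_ext_eq_double_sum:
  "bil_ext B u v = (\<Sum>q | u q \<noteq> 0. \<Sum>q' | v q' \<noteq> 0. fscale (u q * v q') (B q q'))"
  by (simp add: bil_ext_def lin_ext_def fs.scale_sum_right)

lemma bil_ext_swap: "bil_ext (\<lambda>q q'. B q' q) u v = bil_ext B v u"
  unfolding bil_ext_eq_double_sum by (subst sum.swap) (simp add: mult.commute)

lemma bil_ext_diff_fun: "bil_ext (\<lambda>q q'. B q q' - B' q q') u v = bil_ext B u v - bil_ext B' u v"
  by (simp add: bil_ext_def lin_ext_diff_fun)

lemma bil_ext_gen: "bil_ext B (gen x a) (gen y b) = B (x, a) (y, b)"
  by (simp add: bil_ext_def lin_ext_gen)

lemma bil_ext_in_subspace:
  assumes "fs.subspace V" "\<And>q q'. B q q' \<in> V"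
  shows "bil_ext B u v \<in> V"
  unfolding bil_ext_def by (intro lin_ext_in_subspace assms)

lemma linear_on_free_space_bil_ext_left: "linear_on_free_space (\<lambda>u. bil_ext B u v)"
  unfolding bil_ext_def by (rule linear_on_free_space_lin_ext)

lemma linear_on_free_space_bil_ext_right: "linear_on_free_space (bil_ext B u)"
  by (simp add: linear_on_free_space_def bil_ext_def lin_ext_add lin_ext_scale
      lin_ext_add_fun lin_ext_scale_fun)

lemma subspace_tensor_kernel: "fs.subspace (tensor_kernel scD scE)"
  unfolding tensor_kernel_def by (rule fs.subspace_span)

lemma tensor_relations_subset_free_space: "tensor_relations scD scE \<subseteq> free_space"
  unfolding tensor_relations_def
  by (auto intro!: free_space_diff free_space_scale gen_in_free_space)

definition tensor_map ::
  "('d \<Rightarrow> 'd') \<Rightarrow> ('e \<Rightarrow> 'e') \<Rightarrow> ('d \<times> 'e \<Rightarrow> 'k::field) \<Rightarrow> ('d' \<times> 'e' \<Rightarrow> 'k)"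
  where "tensor_map f g = lin_ext (\<lambda>(x, a). gen (f x) (g a))"

lemma tensor_map_in_tensor_kernel:
  assumes f: "\<And>x y. f (x + y) = f x + f y" "\<And>c x. f (scD c x) = scD' c (f x)"
    and g: "\<And>a b. g (a + b) = g a + g b" "\<And>c a. g (scE c a) = scE' c (g a)"
    and u: "u \<in> tensor_kernel scD scE"
  shows "tensor_map f g u \<in> tensor_kernel scD' scE'"
proof -
  have rel: "\<rho> \<in> tensor_kernel scD' scE'" if "\<rho> \<in> tensor_relations scD' scE'" for \<rho>
    using that unfolding tensor_kernel_def by (rule fs.span_base)
  have "tensor_map f g \<rho> \<in> tensor_kernel scD' scE'" if "\<rho> \<in> tensor_relations scD scE" for \<rho>
    using that unfolding tensor_relations_def
  proof (elim UnE CollectE exE conjE)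
    fix x x' a assume "\<rho> = gen (x + x') a - gen x a - gen x' a"
    then have "tensor_map f g \<rho> = gen (f x + f x') (g a) - gen (f x) (g a) - gen (f x') (g a)"
      by (simp add: tensor_map_def lin_ext_diff lin_ext_gen gen_in_free_space free_space_diff f)
    then show ?thesis by (intro rel) (unfold tensor_relations_def, blast)
  next
    fix x a a' assume "\<rho> = gen x (a + a') - gen x a - gen x a'"
    then have "tensor_map f g \<rho> = gen (f x) (g a + g a') - gen (f x) (g a) - gen (f x) (g a')"
      by (simp add: tensor_map_def lin_ext_diff lin_ext_gen gen_in_free_space free_space_diff g)
    then show ?thesis by (intro rel) (unfold tensor_relations_def, blast)
  next
    fix c x a assume "\<rho> = gen (scD c x) a - fscale c (gen x a)"
    then have "tensor_map f g \<rho> = gen (scD' c (f x)) (g a) - fscale c (gen (f x) (g a))"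
      by (simp add: tensor_map_def lin_ext_diff lin_ext_scale lin_ext_gen gen_in_free_space
          free_space_scale f)
    then show ?thesis by (intro rel) (unfold tensor_relations_def, blast)
  next
    fix c x a assume "\<rho> = gen x (scE c a) - fscale c (gen x a)"
    then have "tensor_map f g \<rho> = gen (f x) (scE' c (g a)) - fscale c (gen (f x) (g a))"
      by (simp add: tensor_map_def lin_ext_diff lin_ext_scale lin_ext_gen gen_in_free_space
          free_space_scale g)
    then show ?thesis by (intro rel) (unfold tensor_relations_def, blast)
  qed
  then show ?thesis
    using u unfolding tensor_map_def tensor_kernel_def[of scD]
    by (rule linear_on_free_space_span_into_subspace[OF linear_on_free_space_lin_ext
          subspace_tensor_kernel tensor_relations_subset_free_space])
qed

definition tensor_mult ::
  "('d \<Rightarrow> 'd \<Rightarrow> 'd) \<Rightarrow> ('d \<Rightarrow> 'd \<Rightarrow> 'd) \<Rightarrow> ('e \<Rightarrow> 'e \<Rightarrow> 'e) \<Rightarrow> ('e \<Rightarrow> 'e \<Rightarrow> 'e)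
   \<Rightarrow> ('d \<times> 'e \<Rightarrow> 'k::field) \<Rightarrow> ('d \<times> 'e \<Rightarrow> 'k) \<Rightarrow> ('d \<times> 'e \<Rightarrow> 'k)" where
  "tensor_mult l r p s = bil_ext (\<lambda>(x, a) (y, b). gen (l x y) (p a b) + gen (r x y) (s a b))"

definition commutator :: "('a \<Rightarrow> 'a \<Rightarrow> 'a::ab_group_add) \<Rightarrow> 'a \<Rightarrow> 'a \<Rightarrow> 'a" where
  "commutator m u v = m u v - m v u"

definition associator :: "('a \<Rightarrow> 'a \<Rightarrow> 'a::ab_group_add) \<Rightarrow> 'a \<Rightarrow> 'a \<Rightarrow> 'a \<Rightarrow> 'a" where
  "associator m u v w = m (m u v) w - m u (m v w)"

lemma tbracket_eq_commutator:
  fixes l r :: "'d \<Rightarrow> 'd \<Rightarrow> 'd" and p s :: "'e \<Rightarrow> 'e \<Rightarrow> 'e"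
  shows "tbracket l r p s = (commutator (tensor_mult l r p s) :: ('d \<times> 'e \<Rightarrow> 'k::field) \<Rightarrow> _)"
proof (intro ext)
  fix u v :: "'d \<times> 'e \<Rightarrow> 'k" and q0
  let ?M = "(\<lambda>(x, a) (y, b). gen (l x y) (p a b) + gen (r x y) (s a b))
    :: 'd \<times> 'e \<Rightarrow> 'd \<times> 'e \<Rightarrow> 'd \<times> 'e \<Rightarrow> 'k"
  have "gen_bracket l r p s (fst q) (snd q) (fst q') (snd q') = ?M q q' - ?M q' q" for q q'
    by (simp add: gen_bracket_def case_prod_unfold algebra_simps)
  then have "tbracket l r p s u v = bil_ext (\<lambda>q q'. ?M q q' - ?M q' q) u v"
    by (simp add: tbracket_def bil_ext_eq_double_sum)
  also have "\<dots> = bil_ext ?M u v - bil_ext (\<lambda>q q'. ?M q' q) u v"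
    by (rule bil_ext_diff_fun)
  also have "\<dots> = commutator (tensor_mult l r p s) u v"
    by (simp only: bil_ext_swap[of ?M] commutator_def tensor_mult_def)
  finally show "tbracket l r p s u v q0 = commutator (tensor_mult l r p s) u v q0" by simp
qed

lemma tensor_mult_in_free_space: "tensor_mult l r p s u v \<in> free_space"
  unfolding tensor_mult_def
  by (intro bil_ext_in_subspace subspace_free_space)
    (simp add: case_prod_unfold free_space_add gen_in_free_space)

lemma linear_on_free_space_tensor_mult_left: "linear_on_free_space (\<lambda>u. tensor_mult l r p s u v)"
  unfolding tensor_mult_def by (rule linear_on_free_space_bil_ext_left)

lemma linear_on_free_space_tensor_mult_right: "linear_on_free_space (tensor_mult l r p s u)"
  unfolding tensor_mult_def by (rule linear_on_free_space_bil_ext_right)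

lemma tensor_mult_gen_right:
  "tensor_mult l r p s u (gen y b)
    = tensor_map (\<lambda>x. l x y) (\<lambda>a. p a b) u + tensor_map (\<lambda>x. r x y) (\<lambda>a. s a b) u"
  unfolding tensor_mult_def bil_ext_def tensor_map_def lin_ext_gen lin_ext_add_fun[symmetric]
  by (simp only: prod.case_distrib case_prod_beta' prod.sel)

lemma tensor_mult_gen_left:
  "tensor_mult l r p s (gen x a) v = tensor_map (l x) (p a) v + tensor_map (r x) (s a) v"
  unfolding tensor_mult_def bil_ext_def tensor_map_def lin_ext_gen lin_ext_add_fun[symmetric]
  by (simp add: case_prod_unfold)

lemma tensor_mult_in_tensor_kernel:
  assumes "bilinear_op scD l" "bilinear_op scD r" "bilinear_op scE p" "bilinear_op scE s"
    and "u \<in> tensor_kernel scD scE" "v \<in> free_space"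
  shows "tensor_mult l r p s u v \<in> tensor_kernel scD scE \<and>
    tensor_mult l r p s v u \<in> tensor_kernel scD scE"
proof
  note bilinear = assms(1-4)[unfolded bilinear_op_def]
  show "tensor_mult l r p s u v \<in> tensor_kernel scD scE"
    by (rule linear_on_free_space_into_subspace[OF linear_on_free_space_tensor_mult_right
          subspace_tensor_kernel _ assms(6)])
      (auto simp: tensor_mult_gen_right bilinear intro!: fs.subspace_add[OF subspace_tensor_kernel]
        tensor_map_in_tensor_kernel[OF _ _ _ _ assms(5)])
  show "tensor_mult l r p s v u \<in> tensor_kernel scD scE"
    by (rule linear_on_free_space_into_subspace[OF linear_on_free_space_tensor_mult_left
          subspace_tensor_kernel _ assms(6)])
      (auto simp: tensor_mult_gen_left bilinear intro!: fs.subspace_add[OF subspace_tensor_kernel]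
        tensor_map_in_tensor_kernel[OF _ _ _ _ assms(5)])
qed

locale free_space_algebra =
  fixes m :: "('d \<times> 'e \<Rightarrow> 'k::field) \<Rightarrow> ('d \<times> 'e \<Rightarrow> 'k) \<Rightarrow> ('d \<times> 'e \<Rightarrow> 'k)"
  assumes mult_in_free_space: "m u v \<in> free_space"
    and linear_left: "linear_on_free_space (\<lambda>u. m u v)"
    and linear_right: "linear_on_free_space (m u)"
begin

lemma linear_on_free_space_associator_left: "linear_on_free_space (\<lambda>u. associator m u v w)"
  unfolding associator_def
  by (rule linear_on_free_space_diff[OF linear_on_free_space_comp[OF linear_left linear_left
        mult_in_free_space] linear_left])

lemma linear_on_free_space_associator_middle: "linear_on_free_space (\<lambda>v. associator m u v w)"
  unfolding associator_def
  by (rule linear_on_free_space_diff[OF linear_on_free_space_comp[OF linear_left linear_right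
        mult_in_free_space] linear_on_free_space_comp[OF linear_right linear_left mult_in_free_space]])

lemma linear_on_free_space_associator_right: "linear_on_free_space (associator m u v)"
  unfolding associator_def
  by (rule linear_on_free_space_diff[OF linear_right linear_on_free_space_comp[OF linear_right
        linear_right mult_in_free_space]])

lemma commutator_in_free_space: "commutator m u v \<in> free_space"
  unfolding commutator_def by (intro free_space_diff mult_in_free_space)

lemma linear_on_free_space_commutator_left: "linear_on_free_space (\<lambda>u. commutator m u v)"
  unfolding commutator_def by (intro linear_on_free_space_diff linear_left linear_right)

lemma linear_on_free_space_commutator_right: "linear_on_free_space (commutator m u)"
  unfolding commutator_def by (intro linear_on_free_space_diff linear_left linear_right)

lemma jacobi_in_subspace:
  assumes V: "fs.subspace V"
    and assoc: "\<And>u v w. u \<in> free_space \<Longrightarrow> v \<in> free_space \<Longrightarrow> w \<in> free_space \<Longrightarrow> associator m u v w \<in> V"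
    and free: "u \<in> free_space" "v \<in> free_space" "w \<in> free_space"
  shows "commutator m u (commutator m v w) + commutator m v (commutator m w u)
    + commutator m w (commutator m u v) \<in> V"
proof -
  have "commutator m u (commutator m v w) + commutator m v (commutator m w u)
      + commutator m w (commutator m u v)
    = associator m u w v - associator m u v w + associator m w v u - associator m v w u
      + associator m v u w - associator m w u v"
    using free
    by (simp add: commutator_def associator_def mult_in_free_space algebra_simps
        linear_on_free_space_diff_apply[OF linear_left] linear_on_free_space_diff_apply[OF linear_right])
  also have "\<dots> \<in> V"
    using free by (intro fs.subspace_add fs.subspace_diff V assoc)
  finally show ?thesis .
qed

lemma commutator_lie_bracket_modulo:
  assumes V: "fs.subspace V"
    and ideal: "\<And>u v. u \<in> V \<Longrightarrow> v \<in> free_space \<Longrightarrow> m u v \<in> V \<and> m v u \<in> V"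
    and assoc: "\<And>u v w. u \<in> free_space \<Longrightarrow> v \<in> free_space \<Longrightarrow> w \<in> free_space
      \<Longrightarrow> associator m u v w \<in> V"
  shows
    "(\<forall>u\<in>free_space. \<forall>v\<in>free_space. commutator m u v \<in> free_space) \<and>
     (\<forall>u\<in>free_space. \<forall>v\<in>free_space. u \<in> V \<longrightarrow> commutator m u v \<in> V \<and> commutator m v u \<in> V) \<and>
     (\<forall>u\<in>free_space. \<forall>u'\<in>free_space. \<forall>v\<in>free_space.
        commutator m (u + u') v = commutator m u v + commutator m u' v \<and>
        commutator m v (u + u') = commutator m v u + commutator m v u') \<and>
     (\<forall>c. \<forall>u\<in>free_space. \<forall>v\<in>free_space.
        commutator m (fscale c u) v = fscale c (commutator m u v) \<and>
        commutator m v (fscale c u) = fscale c (commutator m v u)) \<and>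
     (\<forall>u\<in>free_space. commutator m u u \<in> V) \<and>
     (\<forall>u\<in>free_space. \<forall>v\<in>free_space. \<forall>w\<in>free_space.
        commutator m u (commutator m v w) + commutator m v (commutator m w u)
          + commutator m w (commutator m u v) \<in> V)"
proof (intro conjI ballI allI impI)
  fix u v :: "'d \<times> 'e \<Rightarrow> 'k"
  show "commutator m u v \<in> free_space"
    by (rule commutator_in_free_space)
  show "commutator m u v \<in> V" "commutator m v u \<in> V" if "u \<in> V" "v \<in> free_space"
    using ideal[OF that] unfolding commutator_def by (auto intro: fs.subspace_diff[OF V])
next
  fix u u' v :: "'d \<times> 'e \<Rightarrow> 'k"
  assume "u \<in> free_space" "u' \<in> free_space"
  then show "commutator m (u + u') v = commutator m u v + commutator m u' v"
      "commutator m v (u + u') = commutator m v u + commutator m v u'"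
    using linear_on_free_space_commutator_left linear_on_free_space_commutator_right
    unfolding linear_on_free_space_def by blast+
next
  fix c and u v :: "'d \<times> 'e \<Rightarrow> 'k"
  assume "u \<in> free_space"
  then show "commutator m (fscale c u) v = fscale c (commutator m u v)"
      "commutator m v (fscale c u) = fscale c (commutator m v u)"
    using linear_on_free_space_commutator_left linear_on_free_space_commutator_right
    unfolding linear_on_free_space_def by blast+
next
  fix u :: "'d \<times> 'e \<Rightarrow> 'k"
  show "commutator m u u \<in> V"
    by (simp add: commutator_def fs.subspace_0[OF V])
next
  fix u v w :: "'d \<times> 'e \<Rightarrow> 'k"
  assume "u \<in> free_space" "v \<in> free_space" "w \<in> free_space"
  then show "commutator m u (commutator m v w) + commutator m v (commutator m w u)
      + commutator m w (commutator m u v) \<in> V"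
    by (intro jacobi_in_subspace[OF V] assoc)
qed

end

interpretation tensor_mult: free_space_algebra "tensor_mult l r p s" for l r p s
  by unfold_locales (rule tensor_mult_in_free_space linear_on_free_space_tensor_mult_left
      linear_on_free_space_tensor_mult_right)+

lemma tensor_mult_gen:
  "tensor_mult l r p s (gen x a) (gen y b) = gen (l x y) (p a b) + gen (r x y) (s a b)"
  by (simp only: tensor_mult_def bil_ext_gen prod.case)

lemma gen_add_right_in_tensor_kernel: "gen x (a + a') - gen x a - gen x a' \<in> tensor_kernel scD scE"
  unfolding tensor_kernel_def tensor_relations_def by (rule fs.span_base) blast

lemma associator_tensor_mult_gen_in_tensor_kernel:
  fixes scD :: "'k::field \<Rightarrow> 'd::ab_group_add \<Rightarrow> 'd" and scE :: "'k \<Rightarrow> 'e::ab_group_add \<Rightarrow> 'e"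
  assumes "dialgebra scD l r" "dendriform scE p s"
  shows "associator (tensor_mult l r p s) (gen x a) (gen y b) (gen z c) \<in> tensor_kernel scD scE"
proof -
  let ?m = "tensor_mult l r p s :: ('d \<times> 'e \<Rightarrow> 'k) \<Rightarrow> _"
  have D: "l (l x y) z = l x (l y z)" "l x (r y z) = l x (l y z)" "l (r x y) z = r x (l y z)"
      "r (l x y) z = r x (r y z)" "r (r x y) z = r x (r y z)"
    using assms(1) unfolding dialgebra_def by metis+
  have E: "p (p a b) c = p a (p b c) + p a (s b c)" "p (s a b) c = s a (p b c)"
      "s a (s b c) = s (p a b) c + s (s a b) c"
    using assms(2) unfolding dendriform_def by metis+
  have add_left: "?m (u + u') w = ?m u w + ?m u' w" if "u \<in> free_space" "u' \<in> free_space" for u u' w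
    using that tensor_mult.linear_left unfolding linear_on_free_space_def by blast
  have add_right: "?m w (u + u') = ?m w u + ?m w u'" if "u \<in> free_space" "u' \<in> free_space" for u u' w
    using that tensor_mult.linear_right unfolding linear_on_free_space_def by blast
  have left: "?m (?m (gen x a) (gen y b)) (gen z c) =
      gen (l x (l y z)) (p a (p b c) + p a (s b c)) + gen (r x (r y z)) (s (p a b) c)
      + gen (r x (l y z)) (s a (p b c)) + gen (r x (r y z)) (s (s a b) c)"
    by (simp add: tensor_mult_gen add_left gen_in_free_space D E)
  have right: "?m (gen x a) (?m (gen y b) (gen z c)) =
      gen (l x (l y z)) (p a (p b c)) + gen (r x (l y z)) (s a (p b c))
      + gen (l x (l y z)) (p a (s b c)) + gen (r x (r y z)) (s (p a b) c + s (s a b) c)"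
    by (simp add: tensor_mult_gen add_right gen_in_free_space D E)
  have "associator ?m (gen x a) (gen y b) (gen z c) =
      (gen (l x (l y z)) (p a (p b c) + p a (s b c)) - gen (l x (l y z)) (p a (p b c))
        - gen (l x (l y z)) (p a (s b c)))
      - (gen (r x (r y z)) (s (p a b) c + s (s a b) c) - gen (r x (r y z)) (s (p a b) c)
        - gen (r x (r y z)) (s (s a b) c))"
    unfolding associator_def left right by (simp add: algebra_simps)
  then show ?thesis
    by (simp only:) (intro fs.subspace_diff[OF subspace_tensor_kernel] gen_add_right_in_tensor_kernel)
qed

lemma associator_tensor_mult_in_tensor_kernel:
  assumes "dialgebra scD l r" "dendriform scE p s"
    and "u \<in> free_space" "v \<in> free_space" "w \<in> free_space"
  shows "associator (tensor_mult l r p s) u v w \<in> tensor_kernel scD scE"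
  by (rule trilinear_on_free_space_into_subspace[OF subspace_tensor_kernel
        tensor_mult.linear_on_free_space_associator_left
        tensor_mult.linear_on_free_space_associator_middle
        tensor_mult.linear_on_free_space_associator_right
        associator_tensor_mult_gen_in_tensor_kernel[OF assms(1,2)] assms(3-5)])

theorem proposition5p3:
  fixes scD :: "'k::field \<Rightarrow> 'd::ab_group_add \<Rightarrow> 'd"
    and scE :: "'k \<Rightarrow> 'e::ab_group_add \<Rightarrow> 'e"
    and l r :: "'d \<Rightarrow> 'd \<Rightarrow> 'd"
    and p s :: "'e \<Rightarrow> 'e \<Rightarrow> 'e"
  assumes "dialgebra scD l r"
    and "dendriform scE p s"
  defines "N \<equiv> tensor_kernel scD scE"
    and "br \<equiv> (tbracket l r p s :: ('d \<times> 'e \<Rightarrow> 'k) \<Rightarrow> _ \<Rightarrow> _)"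
  shows
    \<comment> \<open>the bracket maps F \<times> F into F and descends to the quotient F/N = D \<otimes> E\<close>
    "(\<forall>u\<in>free_space. \<forall>v\<in>free_space. br u v \<in> free_space) \<and>
     (\<forall>u\<in>free_space. \<forall>v\<in>free_space. u \<in> N \<longrightarrow> br u v \<in> N \<and> br v u \<in> N) \<and>
     \<comment> \<open>bilinearity\<close>
     (\<forall>u\<in>free_space. \<forall>u'\<in>free_space. \<forall>v\<in>free_space.
        br (u + u') v = br u v + br u' v \<and> br v (u + u') = br v u + br v u') \<and>
     (\<forall>c. \<forall>u\<in>free_space. \<forall>v\<in>free_space.
        br (fscale c u) v = fscale c (br u v) \<and> br v (fscale c u) = fscale c (br v u)) \<and>
     \<comment> \<open>alternating\<close>
     (\<forall>u\<in>free_space. br u u \<in> N) \<and>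
     \<comment> \<open>Jacobi identity\<close>
     (\<forall>u\<in>free_space. \<forall>v\<in>free_space. \<forall>w\<in>free_space.
        br u (br v w) + br v (br w u) + br w (br u v) \<in> N)"
proof -
  have "bilinear_op scD l" "bilinear_op scD r" "bilinear_op scE p" "bilinear_op scE s"
    using assms(1,2) unfolding dialgebra_def dendriform_def by auto
  then show ?thesis
    unfolding br_def N_def tbracket_eq_commutator
    by (rule tensor_mult.commutator_lie_bracket_modulo[OF subspace_tensor_kernel
          tensor_mult_in_tensor_kernel associator_tensor_mult_in_tensor_kernel[OF assms(1,2)]])
qed

end
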